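(* The class of I$^2$-GNNs can count $3$-paths and $4$-paths at node level: for $L\in\{3,4\}$ and all node-graph pairs $(i_1,G_1),(i_2,G_2)$ with $C(L\text{-path},i_1,G_1)\ne C(L\text{-path},i_2,G_2)$, there exists an I$^2$-GNN whose node representations satisfy $h_{i_1}(G_1)\ne h_{i_2}(G_2)$.
   Context: Graphs are finite, simple, undirected, $G=(V,E)$, possibly carrying node attributes $x_v$ and edge attributes $e_{u,v}$ (a fixed constant when absent). $N(v)$ is the neighbour set of $v$. For $L\ge1$, an $L$-path is a sequence of edges $(v_1,v_2),\dots,(v_L,v_{L+1})$ with $v_1,\dots,v_{L+1}$ pairwise distinct; two paths are identified when their edge sets coincide; $C(L\text{-path},i,G)$ is the number of inequivalent $L$-paths starting from $i$ (i.e. with $v_1=i$). A class $\mathcal F$ of functions on node-graph pairs can count $S$ at node level if for all $(i_1,G_1),(i_2,G_2)$ with $C(S,i_1,G_1)\ne C(S,i_2,G_2)$ there is $f\in\mathcal F$ with $f(i_1,G_1)\ne f(i_2,G_2)$. I$^2$-GNNs. An I$^2$-GNN is specified by an integer $K\ge1$, $T$, arbitrary functions $M_t$ (values in some $\mathbb R^{d_t}$), $U_t$, and arbitrary readouts $R_{\text{edge}},R_{\text{node}}$ on finite multisets. For each root $i\in V$ let $(V_i,E_i)$ be the subgraph of $G$ induced by nodes at shortest-path distance at most $K$ from $i$, and $N_i(k)=\{l\in V_i:(k,l)\in E_i\}$. For each $j\in N(i)$ and $k\in V_i$: $h^{(0)}_{i,j,k}=x_k\oplus\mathbb 1_{k=i}\oplus\mathbb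 1_{k=j}$, $h^{(t+1)}_{i,j,k}=U_t\big(h^{(t)}_{i,j,k},\sum_{l\in N_i(k)}M_t(h^{(t)}_{i,j,k},h^{(t)}_{i,j,l},e_{k,l})\big)$; then $h_{i,j}=R_{\text{edge}}(\{\!\{h^{(T)}_{i,j,k}:k\in V_i\}\!\})$ and $h_i=R_{\text{node}}(\{\!\{h_{i,j}:j\in N(i)\}\!\})$. The node-level function computed is $(i,G)\mapsto h_i$; the class of I$^2$-GNNs consists of all such choices. *)

theory Defs
  imports Complex_Main "HOL-Library.Multiset"
begin

text \<open>Node attributes x_v and edge attributes e_{u,v} are real vectors (real lists);
  when absent they are a fixed constant (e.g. the empty list).\<close>

record 'v graph =
  verts :: "'v set"
  adj   :: "'v \<Rightarrow> 'v \<Rightarrow> bool"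
  nattr :: "'v \<Rightarrow> real list"
  eattr :: "'v \<Rightarrow> 'v \<Rightarrow> real list"

definition wf_graph :: "('v, 'z) graph_scheme \<Rightarrow> bool" where
  "wf_graph G \<longleftrightarrow> finite (verts G)
     \<and> (\<forall>u v. adj G u v \<longrightarrow> u \<in> verts G \<and> v \<in> verts G)
     \<and> (\<forall>u v. adj G u v \<longrightarrow> adj G v u)
     \<and> (\<forall>u. \<not> adj G u u)
     \<and> (\<forall>u v. eattr G u v = eattr G v u)"

definition is_lpath :: "('v, 'z) graph_scheme \<Rightarrow> nat \<Rightarrow> 'v list \<Rightarrow> bool" where
  "is_lpath G L p \<longleftrightarrow> length p = L + 1 \<and> distinct p \<and> set p \<subseteq> verts G
     \<and> (\<forall>k<L. adj G (p ! k) (p ! Suc k))"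

definition path_edges :: "'v list \<Rightarrow> 'v set set" where
  "path_edges p = {{p ! k, p ! Suc k} | k. Suc k < length p}"

definition count_paths :: "('v, 'z) graph_scheme \<Rightarrow> nat \<Rightarrow> 'v \<Rightarrow> nat" where
  "count_paths G L i = card {path_edges p | p. is_lpath G L p \<and> hd p = i}"

text \<open>Hidden states are real vectors (real lists); messages of layer t lie in R^(dim t)
  (real lists of length dim t), summed componentwise.\<close>

record i2gnn =
  hops   :: nat
  layers :: nat
  dim    :: "nat \<Rightarrow> nat"
  msg    :: "nat \<Rightarrow> real list \<Rightarrow> real list \<Rightarrow> real list \<Rightarrow> real list"
  upd    :: "nat \<Rightarrow> real list \<Rightarrow> real list \<Rightarrow> real list"
  redge  :: "real list multiset \<Rightarrow> real list"
  rnode  :: "real list multiset \<Rightarrow> real list"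

definition is_i2gnn :: "i2gnn \<Rightarrow> bool" where
  "is_i2gnn N \<longleftrightarrow> hops N \<ge> 1 \<and> (\<forall>t a b c. length (msg N t a b c) = dim N t)"

definition vsum :: "nat \<Rightarrow> ('a \<Rightarrow> real list) \<Rightarrow> 'a set \<Rightarrow> real list" where
  "vsum d f S = map (\<lambda>c. \<Sum>l\<in>S. f l ! c) [0..<d]"

fun reach :: "('v, 'z) graph_scheme \<Rightarrow> nat \<Rightarrow> 'v \<Rightarrow> 'v \<Rightarrow> bool" where
  "reach G 0 i v = (v = i \<and> i \<in> verts G)"
| "reach G (Suc n) i v = (reach G n i v \<or> (\<exists>u. reach G n i u \<and> adj G u v))"

definition sub_verts :: "('v, 'z) graph_scheme \<Rightarrow> nat \<Rightarrow> 'v \<Rightarrow> 'v set" where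
  "sub_verts G K i = {v \<in> verts G. reach G K i v}"

definition sub_nbrs :: "('v, 'z) graph_scheme \<Rightarrow> nat \<Rightarrow> 'v \<Rightarrow> 'v \<Rightarrow> 'v set" where
  "sub_nbrs G K i k = {l \<in> sub_verts G K i. adj G k l}"

definition ind :: "bool \<Rightarrow> real" where
  "ind b = (if b then 1 else 0)"

fun hid :: "i2gnn \<Rightarrow> ('v, 'z) graph_scheme \<Rightarrow> nat \<Rightarrow> 'v \<Rightarrow> 'v \<Rightarrow> 'v \<Rightarrow> real list" where
  "hid N G 0 i j k = nattr G k @ [ind (k = i), ind (k = j)]"
| "hid N G (Suc t) i j k =
     upd N t (hid N G t i j k)
       (vsum (dim N t) (\<lambda>l. msg N t (hid N G t i j k) (hid N G t i j l) (eattr G k l))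
          (sub_nbrs G (hops N) i k))"

definition edge_rep :: "i2gnn \<Rightarrow> ('v, 'z) graph_scheme \<Rightarrow> 'v \<Rightarrow> 'v \<Rightarrow> real list" where
  "edge_rep N G i j =
     redge N (image_mset (\<lambda>k. hid N G (layers N) i j k) (mset_set (sub_verts G (hops N) i)))"

definition node_rep :: "i2gnn \<Rightarrow> ('v, 'z) graph_scheme \<Rightarrow> 'v \<Rightarrow> real list" where
  "node_rep N G i =
     rnode N (image_mset (\<lambda>j. edge_rep N G i j) (mset_set {j \<in> verts G. adj G i j}))"

end

theory Submission
  imports Defs
begin

text \<open>Mark a neighbour j of the root i by the indicators of k = i and k = j. Layer 1
  computes at every node k the number |N(k) - {i, j}|. Layer 2 sums |N(l) - {i, j}| - 1 over
  l in N(k) - {i, j}; for k in N(j) - {i} this counts the two-step continuations of the path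
  i j k, the "- 1" discarding k itself. Layer 3 sums the layer-2 values, resp. |N(k) - {i, j}|,
  over k in N(j) - {i}, i.e. counts the 4-paths, resp. 3-paths, with first edge i j, and keeps
  the result only at the marked node j. Summing over j then counts the paths starting at i.
  All nodes involved lie within distance 3 of i, so their neighbourhoods lie entirely inside
  the 4-hop subgraph. The path counts obey the same recursion: the extensions of a simple
  path p by L + 1 vertices are u q with u a neighbour of the last vertex of p off p and q an
  extension of p u by L vertices.\<close>

lemma successively_conv_nth:
  "successively P xs \<longleftrightarrow> (\<forall>k. Suc k < length xs \<longrightarrow> P (xs ! k) (xs ! Suc k))"
  by (induction xs rule: induct_list012) (auto simp: All_less_Suc2 less_Suc_eq_0_disj)

lemma sum_eq_sum_Diff:
  assumes "finite A" and "\<And>l. l \<in> A \<Longrightarrow> g l = (if l \<in> X then 0 else f l)"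
  shows "sum g A = sum f (A - X)"
proof -
  have "sum g A = (\<Sum>l\<in>A. if l \<in> X then 0 else f l)"
    using assms(2) by (rule sum.cong[OF refl])
  also have "\<dots> = sum f (A - X)"
    using assms(1) by (simp add: sum.If_cases Diff_eq)
  finally show ?thesis .
qed

lemma card_Diff_insert_real:
  assumes "finite B" and "u \<in> B - A"
  shows "real (card (B - insert u A)) = real (card (B - A)) - 1"
proof -
  have "B - insert u A = (B - A) - {u}" by blast
  then have "card (B - insert u A) = card (B - A) - 1"
    using assms by (simp add: card_Diff_singleton)
  moreover have "card (B - A) > 0"
    using assms card_gt_0_iff by blast
  ultimately show ?thesis by simp
qed

lemma sum_ind_delta:
  fixes f :: "'a \<Rightarrow> real"
  assumes "finite A" and "j \<in> A"
  shows "(\<Sum>k\<in>A. ind (k = j) * f k) = f j"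
  using assms by (simp add: ind_def if_distrib[where f = "\<lambda>x. x * _"] cong: if_cong)

definition nbrs :: "('v, 'z) graph_scheme \<Rightarrow> 'v \<Rightarrow> 'v set" where
  "nbrs G v = {u \<in> verts G. adj G v u}"

lemma wf_graph_finite_verts: "wf_graph G \<Longrightarrow> finite (verts G)"
  by (simp add: wf_graph_def)

lemma finite_nbrs: "finite (verts G) \<Longrightarrow> finite (nbrs G v)"
  by (simp add: nbrs_def)

lemma nbrs_irrefl: "wf_graph G \<Longrightarrow> v \<notin> nbrs G v"
  by (simp add: wf_graph_def nbrs_def)

lemma nbrs_sym: "wf_graph G \<Longrightarrow> u \<in> nbrs G v \<longleftrightarrow> v \<in> nbrs G u"
  by (auto simp: wf_graph_def nbrs_def)

lemma reach_mono: "reach G m i v \<Longrightarrow> m \<le> n \<Longrightarrow> reach G n i v"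
  by (induction n) (auto simp: le_Suc_eq)

lemma reach_Suc_nbrs: "reach G n i v \<Longrightarrow> u \<in> nbrs G v \<Longrightarrow> reach G (Suc n) i u"
  by (auto simp: nbrs_def)

lemma sub_nbrs_eq_nbrs:
  assumes "reach G n i k" and "n < K"
  shows "sub_nbrs G K i k = nbrs G k"
proof -
  have "reach G K i l" if "l \<in> nbrs G k" for l
    using reach_mono[OF reach_Suc_nbrs[OF assms(1) that]] assms(2) by simp
  then show ?thesis
    by (auto simp: sub_nbrs_def sub_verts_def nbrs_def)
qed

definition is_path :: "('v, 'z) graph_scheme \<Rightarrow> 'v list \<Rightarrow> bool" where
  "is_path G p \<longleftrightarrow> p \<noteq> [] \<and> distinct p \<and> set p \<subseteq> verts G \<and> successively (adj G) p"

lemma is_path_singleton [simp]: "is_path G [v] \<longleftrightarrow> v \<in> verts G"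
  by (simp add: is_path_def)

lemma is_path_Cons_Cons [simp]:
  "is_path G (u # v # p) \<longleftrightarrow> u \<in> verts G \<and> adj G u v \<and> u \<notin> set (v # p) \<and> is_path G (v # p)"
  by (auto simp: is_path_def)

lemma is_lpath_iff: "is_lpath G L p \<longleftrightarrow> length p = Suc L \<and> is_path G p"
  by (auto simp: is_lpath_def is_path_def successively_conv_nth)

lemma is_path_appendD: "is_path G (p @ q) \<Longrightarrow> p \<noteq> [] \<Longrightarrow> is_path G p"
  by (auto simp: is_path_def successively_append_iff)

lemma is_path_snoc:
  "p \<noteq> [] \<Longrightarrow> is_path G (p @ [u]) \<longleftrightarrow> is_path G p \<and> u \<in> nbrs G (last p) - set p"
  by (auto simp: is_path_def nbrs_def successively_append_iff)

lemma path_edges_conv_image: "path_edges p = (\<lambda>k. {p ! k, p ! Suc k}) ` {..<length p - 1}"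
  by (auto simp: path_edges_def)

lemma path_edges_Cons_Cons: "path_edges (u # v # p) = insert {u, v} (path_edges (v # p))"
  by (simp add: path_edges_conv_image lessThan_Suc_eq_insert_0 image_image)

lemma path_edges_singleton: "path_edges [v] = {}"
  by (simp add: path_edges_def)

lemma path_edges_subset: "e \<in> path_edges p \<Longrightarrow> e \<subseteq> set p"
  by (auto simp: path_edges_def)

lemma path_edges_Cons_Cons_not_in:
  "u \<notin> set (v # p) \<Longrightarrow> path_edges (u # v # p) - {{u, v}} = path_edges (v # p)"
  using path_edges_subset by (fastforce simp: path_edges_Cons_Cons)

text \<open>A simple path is determined by its start and its edge set: the start lies on a
  single edge, which gives the second vertex, and removing that edge leaves the edge set
  of the rest of the path.\<close>
lemma path_edges_inj:
  assumes "distinct p" "distinct q" "p \<noteq> []" "q \<noteq> []" "hd p = hd q"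
    and "path_edges p = path_edges q"
  shows "p = q"
  using assms
proof (induction p arbitrary: q rule: induct_list012)
  case (2 a)
  then obtain q' where q: "q = a # q'" by (cases q) auto
  have "q' = []"
  proof (rule ccontr)
    assume "q' \<noteq> []"
    then obtain c q'' where "q' = c # q''" by (cases q') auto
    then show False using "2.prems" q by (simp add: path_edges_Cons_Cons path_edges_singleton)
  qed
  then show ?case using q by simp
next
  case (3 a b p)
  obtain q' where q: "q = a # q'" using "3.prems" by (cases q) auto
  then obtain c q'' where q': "q' = c # q''"
    using "3.prems" by (cases q') (auto simp: path_edges_Cons_Cons path_edges_singleton)
  have "{a, b} \<in> path_edges (a # c # q'')"
    using "3.prems"(6) q q' by (metis insertI1 path_edges_Cons_Cons)
  moreover have "{a, b} \<notin> path_edges (c # q'')"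
    using "3.prems"(2) q q' path_edges_subset by fastforce
  ultimately have "{a, b} = {a, c}" by (simp add: path_edges_Cons_Cons)
  then have bc: "b = c" using "3.prems"(1) by (auto simp: doubleton_eq_iff)
  have "path_edges (b # p) = path_edges (a # b # p) - {{a, b}}"
    using "3.prems"(1) by (simp add: path_edges_Cons_Cons_not_in del: insert_Diff_if)
  also have "\<dots> = path_edges (a # c # q'') - {{a, c}}"
    using "3.prems"(6) q q' bc by simp
  also have "\<dots> = path_edges (c # q'')"
    using "3.prems"(2) q q' by (simp add: path_edges_Cons_Cons_not_in)
  finally have "path_edges (b # p) = path_edges (c # q'')" .
  then have "b # p = c # q''" using "3.prems"(1,2) q q' bc by (intro "3.IH"(2)) auto
  then show ?case using q q' by simp
qed simp
definition path_exts :: "('v, 'z) graph_scheme \<Rightarrow> nat \<Rightarrow> 'v list \<Rightarrow> 'v list set" where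
  "path_exts G L p = {q. length q = L \<and> is_path G (p @ q)}"

lemma count_paths_eq_card_path_exts: "count_paths G L i = card (path_exts G L [i])"
proof -
  have "{p. is_lpath G L p \<and> hd p = i} = Cons i ` path_exts G L [i]"
  proof (intro set_eqI iffI)
    fix p assume "p \<in> {p. is_lpath G L p \<and> hd p = i}"
    then show "p \<in> Cons i ` path_exts G L [i]"
      by (cases p) (auto simp: is_lpath_iff path_exts_def)
  qed (auto simp: is_lpath_iff path_exts_def)
  then have "{path_edges p | p. is_lpath G L p \<and> hd p = i} =
      path_edges ` Cons i ` path_exts G L [i]"
    by blast
  moreover have "inj_on path_edges (Cons i ` path_exts G L [i])"
  proof (rule inj_onI)
    fix p q assume "p \<in> Cons i ` path_exts G L [i]" "q \<in> Cons i ` path_exts G L [i]"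
      and "path_edges p = path_edges q"
    then show "p = q"
      by (intro path_edges_inj) (auto simp: path_exts_def is_path_def)
  qed
  ultimately show ?thesis
    unfolding count_paths_def by (simp add: card_image)
qed

lemma path_exts_0: "path_exts G 0 p = (if is_path G p then {[]} else {})"
  by (auto simp: path_exts_def)

lemma path_exts_Suc:
  assumes "p \<noteq> []"
  shows "path_exts G (Suc L) p = (\<Union>u \<in> nbrs G (last p) - set p. Cons u ` path_exts G L (p @ [u]))"
proof -
  have "u \<in> nbrs G (last p) - set p" if "is_path G (p @ u # q)" for u q
    using is_path_appendD[of G "p @ [u]" q] that assms by (simp add: is_path_snoc)
  then show ?thesis
    by (auto simp: path_exts_def length_Suc_conv)
qed

lemma finite_path_exts: "finite (verts G) \<Longrightarrow> finite (path_exts G L p)"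
  by (rule finite_subset[OF _ finite_lists_length_eq[of "verts G" L]])
    (auto simp: path_exts_def is_path_def)

lemma card_path_exts_Suc:
  assumes "finite (verts G)" and "p \<noteq> []"
  shows "card (path_exts G (Suc L) p) =
    (\<Sum>u \<in> nbrs G (last p) - set p. card (path_exts G L (p @ [u])))"
  unfolding path_exts_Suc[OF assms(2)]
  by (subst card_UN_disjoint) (auto simp: assms finite_nbrs finite_path_exts card_image)

lemma card_path_exts_1:
  assumes "finite (verts G)" and "is_path G p"
  shows "card (path_exts G 1 p) = card (nbrs G (last p) - set p)"
proof -
  have "p \<noteq> []" using assms(2) by (simp add: is_path_def)
  then show ?thesis
    using assms by (simp add: card_path_exts_Suc path_exts_0 is_path_snoc)
qed

lemma vsum_1: "vsum (Suc 0) f S = [(\<Sum>l\<in>S. f l ! 0)]"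
  by (simp add: vsum_def)

lemma vsum_2: "vsum 2 f S = [(\<Sum>l\<in>S. f l ! 0), (\<Sum>l\<in>S. f l ! 1)]"
  by (simp add: vsum_def eval_nat_numeral upt_Suc)

text \<open>Layer 0 reads the marks of k = i and k = j at the end of the input state, after the
  node attributes, whose length is arbitrary.\<close>
definition counter_msg :: "nat \<Rightarrow> real list \<Rightarrow> real list \<Rightarrow> real list \<Rightarrow> real list" where
  "counter_msg t h h' e = (case t of
       0 \<Rightarrow> [(1 - h' ! (length h' - 2)) * (1 - last h')]
     | Suc 0 \<Rightarrow> [(1 - h' ! 0) * (1 - h' ! 1) * (h' ! 2 - 1)]
     | _ \<Rightarrow> [(1 - h' ! 0) * h' ! 2, (1 - h' ! 0) * h' ! 3])"

definition counter_upd :: "nat \<Rightarrow> real list \<Rightarrow> real list \<Rightarrow> real list" where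
  "counter_upd t h m = (case t of
       0 \<Rightarrow> [h ! (length h - 2), last h, m ! 0]
     | Suc 0 \<Rightarrow> [h ! 0, h ! 1, m ! 0, h ! 2]
     | _ \<Rightarrow> [h ! 1 * m ! 0, h ! 1 * m ! 1])"

definition sum_coords2 :: "real list multiset \<Rightarrow> real list" where
  "sum_coords2 X = [(\<Sum>x\<in>#X. x ! 0), (\<Sum>x\<in>#X. x ! 1)]"

definition path_counter :: i2gnn where
  "path_counter = \<lparr>hops = 4, layers = 3, dim = (\<lambda>t. if t \<le> 1 then 1 else 2),
     msg = counter_msg, upd = counter_upd, redge = sum_coords2, rnode = sum_coords2\<rparr>"

lemma path_counter_simps:
  "hops path_counter = 4" "layers path_counter = 3"
  "redge path_counter = sum_coords2" "rnode path_counter = sum_coords2"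
  by (simp_all add: path_counter_def)

lemma is_i2gnn_path_counter: "is_i2gnn path_counter"
  by (auto simp: is_i2gnn_def path_counter_def counter_msg_def split: nat.split)

lemma sum_coords2_image_mset_set:
  "sum_coords2 (image_mset f (mset_set A)) = [(\<Sum>a\<in>A. f a ! 0), (\<Sum>a\<in>A. f a ! 1)]"
  by (simp add: sum_coords2_def sum_unfold_sum_mset multiset.map_comp comp_def)

definition free_deg :: "('v, 'z) graph_scheme \<Rightarrow> 'v \<Rightarrow> 'v \<Rightarrow> 'v \<Rightarrow> real" where
  "free_deg G i j k = (\<Sum>l\<in>sub_nbrs G 4 i k. (1 - ind (l = i)) * (1 - ind (l = j)))"

definition tail_paths :: "('v, 'z) graph_scheme \<Rightarrow> 'v \<Rightarrow> 'v \<Rightarrow> 'v \<Rightarrow> real" where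
  "tail_paths G i j k =
     (\<Sum>l\<in>sub_nbrs G 4 i k. (1 - ind (l = i)) * (1 - ind (l = j)) * (free_deg G i j l - 1))"

definition paths3_via :: "('v, 'z) graph_scheme \<Rightarrow> 'v \<Rightarrow> 'v \<Rightarrow> 'v \<Rightarrow> real" where
  "paths3_via G i j k = (\<Sum>l\<in>sub_nbrs G 4 i k. (1 - ind (l = i)) * free_deg G i j l)"

definition paths4_via :: "('v, 'z) graph_scheme \<Rightarrow> 'v \<Rightarrow> 'v \<Rightarrow> 'v \<Rightarrow> real" where
  "paths4_via G i j k = (\<Sum>l\<in>sub_nbrs G 4 i k. (1 - ind (l = i)) * tail_paths G i j l)"

lemma hid_path_counter_1:
  "hid path_counter G 1 i j k = [ind (k = i), ind (k = j), free_deg G i j k]"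
  by (simp add: path_counter_def counter_msg_def counter_upd_def vsum_1 free_deg_def)

lemma hid_path_counter_2:
  "hid path_counter G 2 i j k = [ind (k = i), ind (k = j), tail_paths G i j k, free_deg G i j k]"
proof -
  have "hid path_counter G 2 i j k = hid path_counter G (Suc 1) i j k" by (simp only: Suc_1)
  also have "\<dots> = [ind (k = i), ind (k = j), tail_paths G i j k, free_deg G i j k]"
    by (simp only: hid.simps(2) hid_path_counter_1)
      (simp add: path_counter_def counter_msg_def counter_upd_def vsum_1 tail_paths_def)
  finally show ?thesis .
qed

lemma hid_path_counter_3:
  "hid path_counter G 3 i j k =
    [ind (k = j) * paths4_via G i j k, ind (k = j) * paths3_via G i j k]"
proof -
  have "hid path_counter G 3 i j k = hid path_counter G (Suc 2) i j k" by (simp del: hid.simps)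
  also have "\<dots> = [ind (k = j) * paths4_via G i j k, ind (k = j) * paths3_via G i j k]"
    by (simp only: hid.simps(2) hid_path_counter_2)
      (simp add: path_counter_def counter_msg_def counter_upd_def vsum_2
        paths3_via_def paths4_via_def)
  finally show ?thesis .
qed

context
  fixes G :: "('v, 'z) graph_scheme" and i j :: 'v
  assumes wf: "wf_graph G" and i: "i \<in> verts G" and j: "j \<in> nbrs G i"
begin

lemmas finite_verts = wf_graph_finite_verts[OF wf]

lemma reach_1: "reach G 1 i j"
  using reach_Suc_nbrs[of G 0 i i j] i j by simp

lemma reach_2: "k \<in> nbrs G j \<Longrightarrow> reach G 2 i k"
  using reach_Suc_nbrs[OF reach_1] by (metis Suc_1)

lemma reach_3: "k \<in> nbrs G j \<Longrightarrow> l \<in> nbrs G k \<Longrightarrow> reach G 3 i l"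
  using reach_Suc_nbrs[OF reach_2] by (metis numeral_2_eq_2 numeral_3_eq_3)

lemma free_deg_eq:
  assumes "reach G n i k" and "n < 4"
  shows "free_deg G i j k = card (nbrs G k - {i, j})"
proof -
  have "free_deg G i j k = (\<Sum>l\<in>nbrs G k. (1 - ind (l = i)) * (1 - ind (l = j)))"
    by (simp add: free_deg_def sub_nbrs_eq_nbrs[OF assms])
  also have "\<dots> = (\<Sum>l\<in>nbrs G k - {i, j}. 1)"
    by (rule sum_eq_sum_Diff) (auto simp: finite_verts finite_nbrs ind_def)
  finally show ?thesis by simp
qed

lemma paths3_via_eq: "paths3_via G i j j = card (path_exts G 2 [i, j])"
proof -
  have "paths3_via G i j j = (\<Sum>k\<in>nbrs G j. (1 - ind (k = i)) * free_deg G i j k)"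
    by (simp add: paths3_via_def sub_nbrs_eq_nbrs[OF reach_1])
  also have "\<dots> = (\<Sum>k\<in>nbrs G j - {i, j}. real (card (path_exts G 1 [i, j, k])))"
  proof (rule sum_eq_sum_Diff)
    fix k assume k: "k \<in> nbrs G j"
    show "(1 - ind (k = i)) * free_deg G i j k =
      (if k \<in> {i, j} then 0 else real (card (path_exts G 1 [i, j, k])))"
    proof (cases "k = i")
      case False
      have "is_path G [i, j, k]"
        using False i j k nbrs_irrefl[OF wf] by (auto simp: nbrs_def)
      then have "card (path_exts G 1 [i, j, k]) = card (nbrs G k - {i, j, k})"
        using card_path_exts_1[OF finite_verts] by simp
      also have "nbrs G k - {i, j, k} = nbrs G k - {i, j}"
        using nbrs_irrefl[OF wf] by auto
      finally show ?thesis
        using False k nbrs_irrefl[OF wf] free_deg_eq[OF reach_2[OF k]] j nbrs_sym[OF wf]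
        by (auto simp: ind_def)
    qed (simp add: ind_def)
  qed (simp add: finite_verts finite_nbrs)
  also have "\<dots> = card (path_exts G 2 [i, j])"
    using card_path_exts_Suc[OF finite_verts, of "[i, j]" 1] by (simp add: numeral_2_eq_2)
  finally show ?thesis .
qed

lemma tail_paths_eq:
  assumes k: "k \<in> nbrs G j - {i}"
  shows "tail_paths G i j k = card (path_exts G 2 [i, j, k])"
proof -
  have "tail_paths G i j k =
      (\<Sum>l\<in>nbrs G k. (1 - ind (l = i)) * (1 - ind (l = j)) * (free_deg G i j l - 1))"
    using k by (simp add: tail_paths_def sub_nbrs_eq_nbrs[OF reach_2])
  also have "\<dots> = (\<Sum>l\<in>nbrs G k - {i, j, k}. real (card (path_exts G 1 [i, j, k, l])))"
  proof (rule sum_eq_sum_Diff)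
    fix l assume l: "l \<in> nbrs G k"
    show "(1 - ind (l = i)) * (1 - ind (l = j)) * (free_deg G i j l - 1) =
      (if l \<in> {i, j, k} then 0 else real (card (path_exts G 1 [i, j, k, l])))"
    proof (cases "l \<in> {i, j}")
      case False
      have "is_path G [i, j, k, l]"
        using False i j k l nbrs_irrefl[OF wf] by (auto simp: nbrs_def)
      then have "card (path_exts G 1 [i, j, k, l]) = card (nbrs G l - {i, j, k, l})"
        using card_path_exts_1[OF finite_verts] by simp
      also have "nbrs G l - {i, j, k, l} = nbrs G l - insert k {i, j}"
        using nbrs_irrefl[OF wf] by auto
      also have "k \<in> nbrs G l - {i, j}"
        using False k l j nbrs_sym[OF wf] nbrs_irrefl[OF wf] by auto
      then have "real (card (nbrs G l - insert k {i, j})) = real (card (nbrs G l - {i, j})) - 1"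
        by (rule card_Diff_insert_real[OF finite_nbrs[OF finite_verts]])
      finally have "card (path_exts G 1 [i, j, k, l]) = real (card (nbrs G l - {i, j})) - 1" .
      then show ?thesis
        using False l nbrs_irrefl[OF wf] free_deg_eq[OF reach_3[OF _ l]] k
        by (auto simp: ind_def)
    qed (auto simp: ind_def)
  qed (simp add: finite_verts finite_nbrs)
  also have "\<dots> = card (path_exts G 2 [i, j, k])"
    using card_path_exts_Suc[OF finite_verts, of "[i, j, k]" 1] by (simp add: numeral_2_eq_2)
  finally show ?thesis .
qed

lemma paths4_via_eq: "paths4_via G i j j = card (path_exts G 3 [i, j])"
proof -
  have "paths4_via G i j j = (\<Sum>k\<in>nbrs G j. (1 - ind (k = i)) * tail_paths G i j k)"
    by (simp add: paths4_via_def sub_nbrs_eq_nbrs[OF reach_1])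
  also have "\<dots> = (\<Sum>k\<in>nbrs G j - {i, j}. real (card (path_exts G 2 [i, j, k])))"
    by (rule sum_eq_sum_Diff)
      (auto simp: finite_verts finite_nbrs ind_def tail_paths_eq nbrs_irrefl[OF wf])
  also have "\<dots> = card (path_exts G 3 [i, j])"
    using card_path_exts_Suc[OF finite_verts, of "[i, j]" 2] by (simp add: numeral_3_eq_3)
  finally show ?thesis .
qed

lemma edge_rep_path_counter:
  "edge_rep path_counter G i j = [paths4_via G i j j, paths3_via G i j j]"
proof -
  have "finite (sub_verts G 4 i)" "j \<in> sub_verts G 4 i"
    using finite_verts j reach_mono[OF reach_1] by (auto simp: sub_verts_def nbrs_def)
  then show ?thesis
    by (simp add: edge_rep_def path_counter_simps hid_path_counter_3 sum_coords2_image_mset_set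
        sum_ind_delta)
qed

end

lemma node_rep_path_counter:
  assumes wf: "wf_graph G" and i: "i \<in> verts G"
  shows "node_rep path_counter G i = [real (count_paths G 4 i), real (count_paths G 3 i)]"
proof -
  have "node_rep path_counter G i =
      [(\<Sum>j\<in>nbrs G i. paths4_via G i j j), (\<Sum>j\<in>nbrs G i. paths3_via G i j j)]"
    using edge_rep_path_counter[OF assms]
    by (simp add: node_rep_def path_counter_simps sum_coords2_image_mset_set nbrs_def[symmetric])
  also have "\<dots> = [(\<Sum>j\<in>nbrs G i. real (card (path_exts G 3 [i, j]))),
      (\<Sum>j\<in>nbrs G i. real (card (path_exts G 2 [i, j])))]"
    using paths4_via_eq[OF assms] paths3_via_eq[OF assms] by simp
  also have "\<dots> = [real (count_paths G 4 i), real (count_paths G 3 i)]"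
  proof -
    have "nbrs G i - {i} = nbrs G i" using nbrs_irrefl[OF wf] by simp
    then show ?thesis
      using card_path_exts_Suc[OF wf_graph_finite_verts[OF wf], of "[i]" 3]
        card_path_exts_Suc[OF wf_graph_finite_verts[OF wf], of "[i]" 2]
      by (simp add: count_paths_eq_card_path_exts)
  qed
  finally show ?thesis .
qed

theorem theorem4:
  fixes G1 :: "'v graph" and G2 :: "'w graph" and i1 :: 'v and i2 :: 'w and L :: nat
  assumes "L \<in> {3, 4}"
    and "wf_graph G1" and "wf_graph G2"
    and "i1 \<in> verts G1" and "i2 \<in> verts G2"
    and "count_paths G1 L i1 \<noteq> count_paths G2 L i2"
  shows "\<exists>N. is_i2gnn N \<and> node_rep N G1 i1 \<noteq> node_rep N G2 i2"
proof (intro exI conjI)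
  show "is_i2gnn path_counter"
    by (rule is_i2gnn_path_counter)
  show "node_rep path_counter G1 i1 \<noteq> node_rep path_counter G2 i2"
    using assms node_rep_path_counter[OF assms(2,4)] node_rep_path_counter[OF assms(3,5)] by auto
qed

end
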